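(* Let $\mathbf P$ be a cyclic CFSM protocol with communication graph $G=(N,E)$. Let $\Gamma$ be a path in the global state space of $\mathbf P$ from a global state $(S,C^0)$ to a global state $(S',C^0)$. Then for every edge $\beta\in E$ there exists a path $\Gamma'$ in the global state space such that (a) $\Gamma$ and $\Gamma'$ are locally equal, and (b) every global state $(S'',(x_\xi:\xi\in E))$ on $\Gamma'$ satisfies $\sum_{\xi\in E,\ \xi\neq\beta}|x_\xi|\le 1$.
   Context: A CFSM protocol $\mathbf P$ consists of: a finite directed graph $G=(N,E)$ (the communication graph; each edge $\xi\in E$ has a tail $-\xi\in N$ and a head $+\xi\in N$); pairwise disjoint finite sets $M_\xi$ of messages, $\xi\in E$; and for each $j\in N$ a finite state machine $F_j=(K_j,\Sigma_j,T_j,h_j)$, where $K_j$ is a finite set of states, $h_j\in K_j$ is the initial state, $\Sigma_j=\{+b: b\in M_\xi,\ j=+\xi\}\cup\{-b: b\in M_\xi,\ j=-\xi\}$, and $T_j\subseteq K_j\times\Sigma_j\times K_j$ is the set of transitions, written $p\xrightarrow{e}q$ ($+b$ means "receive $b$", $-b$ means "send $b$"). A composite state is a vector $S=(p_j:j\in N)$ with $p_j\in K_j$; a channel content is $C=(x_\xi:\xi\in E)$ with $x_\xi\in M_\xi^*$; a global state is a pair $(S,C)$. $C^0$ denotes the channel content with all components equal to the empty word $\lambda$; the initial global state is $(S^0,C^0)$ with $S^0=(h_j:j\in N)$. Steps: with $S=(p_j)$, $S'=(q_j)$, $C=(x_\xi)$, $C'=(y_\xi)$, we write $(S,C)\vdash^{+b}(S',C')$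 if there is $\beta\in E$ with $i=+\beta$, $b\in M_\beta$, $p_i\xrightarrow{+b}q_i$ in $F_i$, $p_j=q_j$ for $j\neq i$, $x_\beta=b\,y_\beta$ and $x_\xi=y_\xi$ for $\xi\neq\beta$; and $(S,C)\vdash^{-b}(S',C')$ if there is $\beta\in E$ with $i=-\beta$, $b\in M_\beta$, $p_i\xrightarrow{-b}q_i$ in $F_i$, $p_j=q_j$ for $j\ne i$, $y_\beta=x_\beta b$ and $y_\xi=x_\xi$ for $\xi\neq\beta$. A global state is reachable if it can be reached from $(S^0,C^0)$ by a finite sequence of steps. The global state space is the labelled directed graph whose nodes are the reachable global states and whose edges are these steps; a path is a finite sequence of consecutive steps. For a path $\Gamma=(S_0,C_0)\vdash^{e_1}\cdots\vdash^{e_k}(S_k,C_k)$ and $i\in N$, the image of $\Gamma$ in $F_i$ is the path in the transition diagram of $F_i$, starting at the $i$-th component of $S_0$, formed (in order) by the transitions of $F_i$ performed at those steps $t$ with $e_t\in\Sigma_i$ (a path of length 0 if there are none). Two paths are locally equal if their images in $F_i$ coincide for every $i\in N$. A protocol is cyclic if its communication graph is a directed cycle. *)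

theory Defs
  imports Main
begin

text \<open>Actions: Recv b is "+b" (receive b), Send b is "-b" (send b).\<close>
datatype 'm act = Recv 'm | Send 'm

record ('n, 'e, 'm, 's) cfsm =
  nodes :: "'n set"
  edges :: "'e set"
  etail :: "'e \<Rightarrow> 'n"
  ehead :: "'e \<Rightarrow> 'n"
  msgs  :: "'e \<Rightarrow> 'm set"
  states :: "'n \<Rightarrow> 's set"
  trans :: "'n \<Rightarrow> ('s \<times> 'm act \<times> 's) set"
  init  :: "'n \<Rightarrow> 's"

definition alphabet :: "('n, 'e, 'm, 's) cfsm \<Rightarrow> 'n \<Rightarrow> 'm act set" where
  "alphabet P j =
     {Recv b | b \<xi>. \<xi> \<in> edges P \<and> b \<in> msgs P \<xi> \<and> j = ehead P \<xi>} \<union>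
     {Send b | b \<xi>. \<xi> \<in> edges P \<and> b \<in> msgs P \<xi> \<and> j = etail P \<xi>}"

definition cfsm_protocol :: "('n, 'e, 'm, 's) cfsm \<Rightarrow> bool" where
  "cfsm_protocol P \<longleftrightarrow>
     finite (nodes P) \<and> finite (edges P) \<and>
     (\<forall>\<xi>\<in>edges P. etail P \<xi> \<in> nodes P \<and> ehead P \<xi> \<in> nodes P) \<and>
     (\<forall>\<xi>\<in>edges P. finite (msgs P \<xi>)) \<and>
     (\<forall>\<xi>\<in>edges P. \<forall>\<eta>\<in>edges P. \<xi> \<noteq> \<eta> \<longrightarrow> msgs P \<xi> \<inter> msgs P \<eta> = {}) \<and>
     (\<forall>j\<in>nodes P. finite (states P j) \<and> init P j \<in> states P j \<and>
        trans P j \<subseteq> states P j \<times> alphabet P j \<times> states P j)"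

definition cyclic :: "('n, 'e, 'm, 's) cfsm \<Rightarrow> bool" where
  "cyclic P \<longleftrightarrow> (\<exists>vs es. vs \<noteq> [] \<and> length vs = length es \<and> distinct vs \<and> distinct es \<and>
     set vs = nodes P \<and> set es = edges P \<and>
     (\<forall>k<length es. etail P (es ! k) = vs ! k \<and>
                    ehead P (es ! k) = vs ! ((k + 1) mod length vs)))"

type_synonym ('n, 'e, 'm, 's) gstate = "('n \<Rightarrow> 's) \<times> ('e \<Rightarrow> 'm list)"

definition C0 :: "'e \<Rightarrow> 'm list" where
  "C0 = (\<lambda>_. [])"

fun step :: "('n, 'e, 'm, 's) cfsm \<Rightarrow> ('n, 'e, 'm, 's) gstate \<Rightarrow> 'm act
               \<Rightarrow> ('n, 'e, 'm, 's) gstate \<Rightarrow> bool" where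
  "step P (S, C) (Recv b) (S', C') \<longleftrightarrow>
     (\<exists>\<beta>\<in>edges P. b \<in> msgs P \<beta> \<and>
        (S (ehead P \<beta>), Recv b, S' (ehead P \<beta>)) \<in> trans P (ehead P \<beta>) \<and>
        (\<forall>j. j \<noteq> ehead P \<beta> \<longrightarrow> S j = S' j) \<and>
        C \<beta> = b # C' \<beta> \<and> (\<forall>\<xi>. \<xi> \<noteq> \<beta> \<longrightarrow> C \<xi> = C' \<xi>))"
| "step P (S, C) (Send b) (S', C') \<longleftrightarrow>
     (\<exists>\<beta>\<in>edges P. b \<in> msgs P \<beta> \<and>
        (S (etail P \<beta>), Send b, S' (etail P \<beta>)) \<in> trans P (etail P \<beta>) \<and>
        (\<forall>j. j \<noteq> etail P \<beta> \<longrightarrow> S j = S' j) \<and>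
        C' \<beta> = C \<beta> @ [b] \<and> (\<forall>\<xi>. \<xi> \<noteq> \<beta> \<longrightarrow> C \<xi> = C' \<xi>))"

definition initial :: "('n, 'e, 'm, 's) cfsm \<Rightarrow> ('n, 'e, 'm, 's) gstate" where
  "initial P = (init P, C0)"

definition reachable :: "('n, 'e, 'm, 's) cfsm \<Rightarrow> ('n, 'e, 'm, 's) gstate \<Rightarrow> bool" where
  "reachable P g \<longleftrightarrow> (\<lambda>x y. \<exists>a. step P x a y)\<^sup>*\<^sup>* (initial P) g"

fun steps_from :: "('n, 'e, 'm, 's) cfsm \<Rightarrow> ('n, 'e, 'm, 's) gstate
                     \<Rightarrow> ('m act \<times> ('n, 'e, 'm, 's) gstate) list \<Rightarrow> bool" where
  "steps_from P g [] = True"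
| "steps_from P g ((a, g') # rest) = (step P g a g' \<and> steps_from P g' rest)"

definition is_path :: "('n, 'e, 'm, 's) cfsm \<Rightarrow> ('n, 'e, 'm, 's) gstate
                        \<Rightarrow> ('m act \<times> ('n, 'e, 'm, 's) gstate) list \<Rightarrow> bool" where
  "is_path P g0 ss \<longleftrightarrow> reachable P g0 \<and> steps_from P g0 ss"

definition path_states :: "('n, 'e, 'm, 's) gstate \<Rightarrow> ('m act \<times> ('n, 'e, 'm, 's) gstate) list
                            \<Rightarrow> ('n, 'e, 'm, 's) gstate list" where
  "path_states g0 ss = g0 # map snd ss"

definition path_end :: "('n, 'e, 'm, 's) gstate \<Rightarrow> ('m act \<times> ('n, 'e, 'm, 's) gstate) list
                         \<Rightarrow> ('n, 'e, 'm, 's) gstate" where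
  "path_end g0 ss = last (path_states g0 ss)"

fun image_trans :: "('n, 'e, 'm, 's) cfsm \<Rightarrow> 'n \<Rightarrow> ('n, 'e, 'm, 's) gstate
                     \<Rightarrow> ('m act \<times> ('n, 'e, 'm, 's) gstate) list \<Rightarrow> ('s \<times> 'm act \<times> 's) list" where
  "image_trans P i g [] = []"
| "image_trans P i g ((a, g') # rest) =
     (if a \<in> alphabet P i then [(fst g i, a, fst g' i)] else []) @ image_trans P i g' rest"

definition path_image :: "('n, 'e, 'm, 's) cfsm \<Rightarrow> 'n \<Rightarrow> ('n, 'e, 'm, 's) gstate
                     \<Rightarrow> ('m act \<times> ('n, 'e, 'm, 's) gstate) list \<Rightarrow> 's \<times> ('s \<times> 'm act \<times> 's) list" where
  "path_image P i g0 ss = (fst g0 i, image_trans P i g0 ss)"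

definition locally_equal :: "('n, 'e, 'm, 's) cfsm
    \<Rightarrow> ('n, 'e, 'm, 's) gstate \<Rightarrow> ('m act \<times> ('n, 'e, 'm, 's) gstate) list
    \<Rightarrow> ('n, 'e, 'm, 's) gstate \<Rightarrow> ('m act \<times> ('n, 'e, 'm, 's) gstate) list \<Rightarrow> bool" where
  "locally_equal P g0 ss g0' ss' \<longleftrightarrow>
     (\<forall>i\<in>nodes P. path_image P i g0 ss = path_image P i g0' ss')"

end

theory Submission
  imports Defs "HOL-Library.Sublist"
begin

text \<open>
  Removing \<open>\<beta>\<close> from the cycle leaves a directed path, so the nodes can be ranked increasingly
  along every edge other than \<open>\<beta>\<close>, and every node has a single incoming edge. Start from a
  state whose channels off \<open>\<beta>\<close> are empty and let the highest ranked machine whose next action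
  in \<open>\<Gamma>\<close> is enabled act first: actions of distinct machines commute (a receive only needs its
  message to be present), so this action can be moved to the front without changing what any
  machine does. If it acts on \<open>\<beta>\<close>, the channels off \<open>\<beta>\<close> stay empty. Otherwise it is a send on
  an empty edge \<open>e \<noteq> \<beta>\<close>. The receiver of \<open>e\<close> has higher rank, so its next action (which exists,
  as \<open>e\<close> is empty at the end of \<open>\<Gamma>\<close>) was not enabled; hence it is the receive from \<open>e\<close>, which
  the send has just enabled and which is moved next. After these one or two steps the channels
  off \<open>\<beta>\<close> are empty again, having held at most one message; induct on the length of \<open>\<Gamma>\<close>.
\<close>

type_synonym ('n, 'e, 'm, 's) path = "('m act \<times> ('n, 'e, 'm, 's) gstate) list"

lemma edge_of_msg_unique:
  assumes "cfsm_protocol P" "\<xi> \<in> edges P" "\<eta> \<in> edges P" "b \<in> msgs P \<xi>" "b \<in> msgs P \<eta>"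
  shows "\<xi> = \<eta>"
  using assms unfolding cfsm_protocol_def by blast

lemma alphabet_owner_unique:
  assumes "cfsm_protocol P" "a \<in> alphabet P i" "a \<in> alphabet P j"
  shows "i = j"
  using assms(2,3) edge_of_msg_unique[OF assms(1)] unfolding alphabet_def by auto

lemma ehead_in_nodes: "cfsm_protocol P \<Longrightarrow> \<xi> \<in> edges P \<Longrightarrow> ehead P \<xi> \<in> nodes P"
  unfolding cfsm_protocol_def by blast

lemma step_Send_iff:
  "step P (S, C) (Send b) (S', C') \<longleftrightarrow>
     (\<exists>\<xi>\<in>edges P. b \<in> msgs P \<xi> \<and>
        (\<exists>q. (S (etail P \<xi>), Send b, q) \<in> trans P (etail P \<xi>) \<and> S' = S(etail P \<xi> := q)) \<and>
        C' = C(\<xi> := C \<xi> @ [b]))"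
  (is "?L \<longleftrightarrow> ?R")
proof
  assume ?L
  then obtain \<xi> where \<xi>: "\<xi> \<in> edges P" "b \<in> msgs P \<xi>"
    "(S (etail P \<xi>), Send b, S' (etail P \<xi>)) \<in> trans P (etail P \<xi>)"
    "\<forall>j. j \<noteq> etail P \<xi> \<longrightarrow> S j = S' j" "C' \<xi> = C \<xi> @ [b]" "\<forall>\<eta>. \<eta> \<noteq> \<xi> \<longrightarrow> C \<eta> = C' \<eta>"
    by auto
  then have "S' = S(etail P \<xi> := S' (etail P \<xi>))" "C' = C(\<xi> := C \<xi> @ [b])"
    by (auto simp: fun_eq_iff)
  with \<xi> show ?R by blast
qed auto

lemma step_Recv_iff:
  "step P (S, C) (Recv b) (S', C') \<longleftrightarrow>
     (\<exists>\<xi>\<in>edges P. b \<in> msgs P \<xi> \<and>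
        (\<exists>q. (S (ehead P \<xi>), Recv b, q) \<in> trans P (ehead P \<xi>) \<and> S' = S(ehead P \<xi> := q)) \<and>
        C \<xi> \<noteq> [] \<and> hd (C \<xi>) = b \<and> C' = C(\<xi> := tl (C \<xi>)))"
  (is "?L \<longleftrightarrow> ?R")
proof
  assume ?L
  then obtain \<xi> where \<xi>: "\<xi> \<in> edges P" "b \<in> msgs P \<xi>"
    "(S (ehead P \<xi>), Recv b, S' (ehead P \<xi>)) \<in> trans P (ehead P \<xi>)"
    "\<forall>j. j \<noteq> ehead P \<xi> \<longrightarrow> S j = S' j" "C \<xi> = b # C' \<xi>" "\<forall>\<eta>. \<eta> \<noteq> \<xi> \<longrightarrow> C \<eta> = C' \<eta>"
    by auto
  then have "C \<xi> \<noteq> []" "hd (C \<xi>) = b"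
    "S' = S(ehead P \<xi> := S' (ehead P \<xi>))" "C' = C(\<xi> := tl (C \<xi>))"
    by (auto simp: fun_eq_iff)
  with \<xi>(1-3) show ?R by blast
next
  assume ?R
  then show ?L by (auto simp: neq_Nil_conv)
qed

lemma step_Send_channels:
  assumes "cfsm_protocol P" "step P g (Send b) g'" "e \<in> edges P" "b \<in> msgs P e"
  shows "snd g' = (snd g)(e := snd g e @ [b])"
proof -
  obtain S C S' C' where g: "g = (S, C)" "g' = (S', C')" by fastforce
  from assms(2)[unfolded g step_Send_iff]
  obtain \<xi> where "\<xi> \<in> edges P" "b \<in> msgs P \<xi>" "C' = C(\<xi> := C \<xi> @ [b])"
    by (elim bexE conjE)
  moreover have "\<xi> = e" using edge_of_msg_unique[OF assms(1)] calculation assms(3,4) by blast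
  ultimately show ?thesis using g by simp
qed

lemma step_Recv_channels:
  assumes "cfsm_protocol P" "step P g (Recv b) g'" "e \<in> edges P" "b \<in> msgs P e"
  shows "snd g' = (snd g)(e := tl (snd g e))"
proof -
  obtain S C S' C' where g: "g = (S, C)" "g' = (S', C')" by fastforce
  from assms(2)[unfolded g step_Recv_iff]
  obtain \<xi> where "\<xi> \<in> edges P" "b \<in> msgs P \<xi>" "C' = C(\<xi> := tl (C \<xi>))"
    by (elim bexE conjE)
  moreover have "\<xi> = e" using edge_of_msg_unique[OF assms(1)] calculation assms(3,4) by blast
  ultimately show ?thesis using g by simp
qed

lemma step_state_unchanged: "step P g a g' \<Longrightarrow> a \<notin> alphabet P k \<Longrightarrow> fst g' k = fst g k"
  by (cases g; cases g'; cases a) (auto simp: alphabet_def)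

lemma step_actor_exists: "cfsm_protocol P \<Longrightarrow> step P g a g' \<Longrightarrow> \<exists>j\<in>nodes P. a \<in> alphabet P j"
  by (cases g; cases g'; cases a) (auto simp: alphabet_def cfsm_protocol_def)

lemma step_channel_prefix:
  assumes "step P g x g'" "e \<in> edges P" "x \<notin> alphabet P (ehead P e)"
  shows "prefix (snd g e) (snd g' e)"
  using assms by (cases g; cases g'; cases x) (auto simp: alphabet_def, metis prefix_order.refl,
    metis prefix_order.refl prefix_snoc)

section \<open>Commuting steps of distinct machines\<close>

text \<open>Only the channel is inspected, not the local state: enabledness is only asked of an action
  that its machine performs next on a given path.\<close>

definition enabled :: "('n, 'e, 'm, 's) cfsm \<Rightarrow> ('n, 'e, 'm, 's) gstate \<Rightarrow> 'm act \<Rightarrow> bool" where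
  "enabled P g a \<longleftrightarrow>
     (case a of Send b \<Rightarrow> True | Recv b \<Rightarrow> (\<exists>\<xi>\<in>edges P. b \<in> msgs P \<xi> \<and> snd g \<xi> \<noteq> []))"

lemma step_enabled: "step P g a g' \<Longrightarrow> enabled P g a"
  by (cases g; cases g'; cases a) (auto simp: enabled_def)

lemma enabled_Recv_iff:
  assumes "cfsm_protocol P" "e \<in> edges P" "b \<in> msgs P e"
  shows "enabled P g (Recv b) \<longleftrightarrow> snd g e \<noteq> []"
proof
  assume "enabled P g (Recv b)"
  then obtain \<xi> where \<xi>: "\<xi> \<in> edges P" "b \<in> msgs P \<xi>" "snd g \<xi> \<noteq> []"
    by (auto simp: enabled_def)
  have "\<xi> = e" by (rule edge_of_msg_unique[OF assms(1) \<xi>(1) assms(2) \<xi>(2) assms(3)])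
  then show "snd g e \<noteq> []" using \<xi>(3) by simp
qed (use assms(2,3) in \<open>auto simp: enabled_def\<close>)

lemma enabled_step_other:
  assumes prot: "cfsm_protocol P" and x: "step P g x g'"
    and "x \<notin> alphabet P i" "a \<in> alphabet P i" and en: "enabled P g a"
  shows "enabled P g' a"
proof (cases a)
  case (Recv b)
  then obtain \<xi> where \<xi>: "\<xi> \<in> edges P" "b \<in> msgs P \<xi>" "i = ehead P \<xi>"
    using assms(4) edge_of_msg_unique[OF prot] by (auto simp: alphabet_def)
  moreover have "snd g \<xi> \<noteq> []" using en Recv enabled_Recv_iff[OF prot \<xi>(1,2)] by simp
  moreover have "prefix (snd g \<xi>) (snd g' \<xi>)"
    using step_channel_prefix[OF x \<xi>(1)] assms(3) \<xi>(3) by simp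
  ultimately show ?thesis using Recv enabled_Recv_iff[OF prot \<xi>(1,2)] by auto
qed (simp add: enabled_def)

text \<open>Enabledness at the start matters when \<open>a\<close> receives from the channel that the send appends
  to: the message \<open>a\<close> reads must already be at its head.\<close>

lemma step_commute_after_Send:
  assumes prot: "cfsm_protocol P"
    and x: "step P (S, C) (Send b') (Sx, Cx)" and a: "step P (Sx, Cx) a (S2, C2)"
    and indep: "\<And>k. Send b' \<in> alphabet P k \<Longrightarrow> a \<notin> alphabet P k"
    and en: "enabled P (S, C) a"
  shows "\<exists>g1. step P (S, C) a g1 \<and> step P g1 (Send b') (S2, C2)"
proof -
  from x[unfolded step_Send_iff] obtain \<xi> q where \<xi>: "\<xi> \<in> edges P" "b' \<in> msgs P \<xi>"
    "(S (etail P \<xi>), Send b', q) \<in> trans P (etail P \<xi>)"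
    "Sx = S(etail P \<xi> := q)" "Cx = C(\<xi> := C \<xi> @ [b'])"
    by (elim bexE conjE exE)
  have "Send b' \<in> alphabet P (etail P \<xi>)" using \<xi>(1,2) by (auto simp: alphabet_def)
  then have not_owner: "a \<notin> alphabet P (etail P \<xi>)" using indep by blast
  show ?thesis
  proof (cases a)
    case (Send b)
    from a[unfolded Send step_Send_iff] obtain \<eta> q2 where \<eta>: "\<eta> \<in> edges P" "b \<in> msgs P \<eta>"
      "(Sx (etail P \<eta>), Send b, q2) \<in> trans P (etail P \<eta>)"
      "S2 = Sx(etail P \<eta> := q2)" "C2 = Cx(\<eta> := Cx \<eta> @ [b])"
      by (elim bexE conjE exE)
    have "etail P \<xi> \<noteq> etail P \<eta>" using not_owner Send \<eta>(1,2) by (auto simp: alphabet_def)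
    then show ?thesis unfolding Send step_Send_iff using \<xi> \<eta>
      by (intro exI[of _ "(S(etail P \<eta> := q2), C(\<eta> := C \<eta> @ [b]))"] conjI bexI[of _ \<eta>]
          bexI[of _ \<xi>] exI[of _ q] exI[of _ q2]) (auto simp: fun_eq_iff)
  next
    case (Recv b)
    from a[unfolded Recv step_Recv_iff] obtain \<eta> q2 where \<eta>: "\<eta> \<in> edges P" "b \<in> msgs P \<eta>"
      "(Sx (ehead P \<eta>), Recv b, q2) \<in> trans P (ehead P \<eta>)"
      "S2 = Sx(ehead P \<eta> := q2)" "Cx \<eta> \<noteq> []" "hd (Cx \<eta>) = b" "C2 = Cx(\<eta> := tl (Cx \<eta>))"
      by (elim bexE conjE exE)
    have ne: "etail P \<xi> \<noteq> ehead P \<eta>" using not_owner Recv \<eta>(1,2) by (auto simp: alphabet_def)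
    have "C \<eta> \<noteq> []" using en Recv enabled_Recv_iff[OF prot \<eta>(1,2)] by simp
    moreover have "hd (C \<eta>) = b" using \<eta>(6) \<xi>(5) calculation by (cases "\<xi> = \<eta>") auto
    moreover have "C2 = (C(\<eta> := tl (C \<eta>)))(\<xi> := (C(\<eta> := tl (C \<eta>))) \<xi> @ [b'])"
      using \<eta>(7) \<xi>(5) \<open>C \<eta> \<noteq> []\<close> by (cases "\<xi> = \<eta>") (auto simp: fun_upd_twist)
    ultimately show ?thesis unfolding Recv step_Recv_iff step_Send_iff using \<xi> \<eta> ne
      by (intro exI[of _ "(S(ehead P \<eta> := q2), C(\<eta> := tl (C \<eta>)))"] conjI bexI[of _ \<eta>]
          bexI[of _ \<xi>] exI[of _ q] exI[of _ q2]) (auto simp: fun_upd_twist)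
  qed
qed

lemma step_commute_after_Recv:
  assumes x: "step P (S, C) (Recv b') (Sx, Cx)" and a: "step P (Sx, Cx) a (S2, C2)"
    and indep: "\<And>k. Recv b' \<in> alphabet P k \<Longrightarrow> a \<notin> alphabet P k"
  shows "\<exists>g1. step P (S, C) a g1 \<and> step P g1 (Recv b') (S2, C2)"
proof -
  from x[unfolded step_Recv_iff] obtain \<xi> q where \<xi>: "\<xi> \<in> edges P" "b' \<in> msgs P \<xi>"
    "(S (ehead P \<xi>), Recv b', q) \<in> trans P (ehead P \<xi>)"
    "Sx = S(ehead P \<xi> := q)" "C \<xi> \<noteq> []" "hd (C \<xi>) = b'" "Cx = C(\<xi> := tl (C \<xi>))"
    by (elim bexE conjE exE)
  have "Recv b' \<in> alphabet P (ehead P \<xi>)" using \<xi>(1,2) by (auto simp: alphabet_def)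
  then have not_owner: "a \<notin> alphabet P (ehead P \<xi>)" using indep by blast
  show ?thesis
  proof (cases a)
    case (Send b)
    from a[unfolded Send step_Send_iff] obtain \<eta> q2 where \<eta>: "\<eta> \<in> edges P" "b \<in> msgs P \<eta>"
      "(Sx (etail P \<eta>), Send b, q2) \<in> trans P (etail P \<eta>)"
      "S2 = Sx(etail P \<eta> := q2)" "C2 = Cx(\<eta> := Cx \<eta> @ [b])"
      by (elim bexE conjE exE)
    have "ehead P \<xi> \<noteq> etail P \<eta>" using not_owner Send \<eta>(1,2) by (auto simp: alphabet_def)
    then show ?thesis unfolding Send step_Send_iff step_Recv_iff using \<xi> \<eta>
      by (intro exI[of _ "(S(etail P \<eta> := q2), C(\<eta> := C \<eta> @ [b]))"] conjI bexI[of _ \<eta>]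
          bexI[of _ \<xi>] exI[of _ q] exI[of _ q2]) (auto simp: fun_eq_iff)
  next
    case (Recv b)
    from a[unfolded Recv step_Recv_iff] obtain \<eta> q2 where \<eta>: "\<eta> \<in> edges P" "b \<in> msgs P \<eta>"
      "(Sx (ehead P \<eta>), Recv b, q2) \<in> trans P (ehead P \<eta>)"
      "S2 = Sx(ehead P \<eta> := q2)" "Cx \<eta> \<noteq> []" "hd (Cx \<eta>) = b" "C2 = Cx(\<eta> := tl (Cx \<eta>))"
      by (elim bexE conjE exE)
    have "ehead P \<xi> \<noteq> ehead P \<eta>" using not_owner Recv \<eta>(1,2) by (auto simp: alphabet_def)
    then show ?thesis unfolding Recv step_Recv_iff using \<xi> \<eta>
      by (intro exI[of _ "(S(ehead P \<eta> := q2), C(\<eta> := tl (C \<eta>)))"] conjI bexI[of _ \<eta>]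
          bexI[of _ \<xi>] exI[of _ q] exI[of _ q2]) (auto simp: fun_eq_iff)
  qed
qed

lemma step_commute:
  assumes prot: "cfsm_protocol P" and x: "step P g x gx" and a: "step P gx a g2"
    and indep: "\<And>k. x \<in> alphabet P k \<Longrightarrow> a \<notin> alphabet P k" and en: "enabled P g a"
  shows "\<exists>g1. step P g a g1 \<and> step P g1 x g2"
proof -
  obtain S C Sx Cx S2 C2 where g: "g = (S, C)" "gx = (Sx, Cx)" "g2 = (S2, C2)"
    by (metis prod.exhaust)
  show ?thesis
  proof (cases x)
    case (Send b')
    then show ?thesis
      using step_commute_after_Send[OF prot x[unfolded g Send] a[unfolded g] _ en[unfolded g]] indep g
      by simp
  next
    case (Recv b')
    then show ?thesis
      using step_commute_after_Recv[OF x[unfolded g Recv] a[unfolded g]] indep g by simp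
  qed
qed

section \<open>Reordering paths\<close>

lemma image_trans_in_alphabet: "(s, a, s') \<in> set (image_trans P i g \<Gamma>) \<Longrightarrow> a \<in> alphabet P i"
  by (induction \<Gamma> arbitrary: g) (auto split: if_splits)

lemma path_end_Nil [simp]: "path_end g [] = g"
  by (simp add: path_end_def path_states_def)

lemma path_end_Cons [simp]: "path_end g ((a, g') # \<Gamma>) = path_end g' \<Gamma>"
  by (simp add: path_end_def path_states_def)

lemma path_states_Nil [simp]: "path_states g [] = [g]"
  by (simp add: path_states_def)

lemma path_states_Cons [simp]: "path_states g ((a, g') # \<Gamma>) = g # path_states g' \<Gamma>"
  by (simp add: path_states_def)

lemma steps_from_append [simp]:
  "steps_from P g (\<Gamma> @ \<Delta>) \<longleftrightarrow> steps_from P g \<Gamma> \<and> steps_from P (path_end g \<Gamma>) \<Delta>"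
  by (induction \<Gamma> arbitrary: g) auto

lemma image_trans_append [simp]:
  "image_trans P i g (\<Gamma> @ \<Delta>) = image_trans P i g \<Gamma> @ image_trans P i (path_end g \<Gamma>) \<Delta>"
  by (induction \<Gamma> arbitrary: g) auto

lemma path_end_append [simp]: "path_end g (\<Gamma> @ \<Delta>) = path_end (path_end g \<Gamma>) \<Delta>"
  by (induction \<Gamma> arbitrary: g) auto

lemma set_path_states_append:
  "set (path_states g (\<Gamma> @ \<Delta>)) = set (path_states g \<Gamma>) \<union> set (path_states (path_end g \<Gamma>) \<Delta>)"
proof -
  have "path_end g \<Gamma> \<in> set (path_states g \<Gamma>)"
    unfolding path_end_def path_states_def by (rule last_in_set) simp
  then show ?thesis unfolding path_states_def by (simp add: Un_insert_right) blast
qed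

lemma channel_prefix_path:
  assumes "steps_from P g \<Gamma>" "e \<in> edges P" "image_trans P (ehead P e) g \<Gamma> = []"
  shows "prefix (snd g e) (snd (path_end g \<Gamma>) e)"
  using assms
proof (induction \<Gamma> arbitrary: g)
  case (Cons y \<Gamma>)
  obtain x gx where y: "y = (x, gx)" by (cases y)
  with Cons.prems have "prefix (snd g e) (snd gx e)"
    by (auto intro: step_channel_prefix split: if_splits)
  also have "prefix (snd gx e) (snd (path_end gx \<Gamma>) e)"
    using Cons y by (auto split: if_splits)
  finally show ?case using y by simp
qed simp

definition reordering :: "('n, 'e, 'm, 's) cfsm \<Rightarrow> ('n, 'e, 'm, 's) gstate
    \<Rightarrow> ('n, 'e, 'm, 's) path \<Rightarrow> ('n, 'e, 'm, 's) path \<Rightarrow> bool" where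
  "reordering P g \<Gamma> \<Gamma>' \<longleftrightarrow>
     steps_from P g \<Gamma>' \<and> (\<forall>i. image_trans P i g \<Gamma>' = image_trans P i g \<Gamma>) \<and>
     path_end g \<Gamma>' = path_end g \<Gamma> \<and> length \<Gamma>' = length \<Gamma>"

lemma reordering_refl: "steps_from P g \<Gamma> \<Longrightarrow> reordering P g \<Gamma> \<Gamma>"
  by (simp add: reordering_def)

lemma reordering_trans [trans]:
  "reordering P g \<Gamma> \<Gamma>' \<Longrightarrow> reordering P g \<Gamma>' \<Gamma>'' \<Longrightarrow> reordering P g \<Gamma> \<Gamma>''"
  by (simp add: reordering_def)

lemma reordering_append:
  "steps_from P g \<Pi> \<Longrightarrow> reordering P (path_end g \<Pi>) \<Gamma> \<Gamma>' \<Longrightarrow> reordering P g (\<Pi> @ \<Gamma>) (\<Pi> @ \<Gamma>')"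
  by (simp add: reordering_def)

lemma reordering_Cons:
  "step P g a g' \<Longrightarrow> reordering P g' \<Gamma> \<Gamma>' \<Longrightarrow> reordering P g ((a, g') # \<Gamma>) ((a, g') # \<Gamma>')"
  using reordering_append[of P g "[(a, g')]"] by simp

lemma reordering_swap:
  assumes x: "step P g x gx" and a: "step P gx a g2" and a': "step P g a g1" and x': "step P g1 x g2"
    and "steps_from P g2 \<Gamma>" and indep: "\<And>k. x \<in> alphabet P k \<Longrightarrow> a \<notin> alphabet P k"
  shows "reordering P g ((x, gx) # (a, g2) # \<Gamma>) ((a, g1) # (x, g2) # \<Gamma>)"
proof -
  have "image_trans P k g ((a, g1) # (x, g2) # \<Gamma>) = image_trans P k g ((x, gx) # (a, g2) # \<Gamma>)" for k
  proof (cases "a \<in> alphabet P k")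
    case True
    then have "x \<notin> alphabet P k" using indep by blast
    then show ?thesis
      using True step_state_unchanged[OF x] step_state_unchanged[OF x'] by simp
  next
    case False
    then show ?thesis using step_state_unchanged[OF a] step_state_unchanged[OF a'] by simp
  qed
  then show ?thesis using assms by (simp add: reordering_def)
qed

lemma reordering_move_to_front:
  assumes prot: "cfsm_protocol P"
  shows "steps_from P g \<Gamma> \<Longrightarrow> image_trans P i g \<Gamma> = (s, a, s') # rest \<Longrightarrow> enabled P g a \<Longrightarrow>
    \<exists>g1 \<Gamma>1. reordering P g \<Gamma> ((a, g1) # \<Gamma>1)"
proof (induction \<Gamma> arbitrary: g)
  case (Cons y \<Gamma>)
  obtain x gx where y: "y = (x, gx)" by (cases y)
  have x: "step P g x gx" and steps: "steps_from P gx \<Gamma>" using Cons.prems(1) y by auto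
  show ?case
  proof (cases "x \<in> alphabet P i")
    case True
    then have "x = a" using Cons.prems(2) y by simp
    then show ?thesis using Cons.prems(1) y reordering_refl by blast
  next
    case False
    then have first: "image_trans P i gx \<Gamma> = (s, a, s') # rest" using Cons.prems(2) y by simp
    then have "a \<in> alphabet P i" using image_trans_in_alphabet by (metis list.set_intros(1))
    then have indep: "\<And>k. x \<in> alphabet P k \<Longrightarrow> a \<notin> alphabet P k"
      using False alphabet_owner_unique[OF prot] by blast
    have "enabled P gx a" using enabled_step_other[OF prot x False \<open>a \<in> alphabet P i\<close> Cons.prems(3)] .
    then obtain g2 \<Gamma>2 where r: "reordering P gx \<Gamma> ((a, g2) # \<Gamma>2)" using Cons.IH[OF steps first] by blast
    then have a: "step P gx a g2" and steps2: "steps_from P g2 \<Gamma>2" by (auto simp: reordering_def)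
    obtain g1 where "step P g a g1" "step P g1 x g2"
      using step_commute[OF prot x a indep Cons.prems(3)] by blast
    have "reordering P g (y # \<Gamma>) ((x, gx) # (a, g2) # \<Gamma>2)" using reordering_Cons[OF x r] y by simp
    also have "reordering P g \<dots> ((a, g1) # (x, g2) # \<Gamma>2)"
      using reordering_swap[OF x a \<open>step P g a g1\<close> \<open>step P g1 x g2\<close> steps2 indep] .
    finally show ?thesis by blast
  qed
qed simp

section \<open>Draining the channels off \<open>\<beta>\<close>\<close>

lemma ex_enabled_max_rank:
  fixes rank :: "'n \<Rightarrow> nat"
  assumes prot: "cfsm_protocol P" and steps: "steps_from P g \<Gamma>" "\<Gamma> \<noteq> []"
  obtains h s a s' rest where "image_trans P h g \<Gamma> = (s, a, s') # rest" "enabled P g a"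
    "\<And>i s a s' rest. i \<in> nodes P \<Longrightarrow> rank h < rank i \<Longrightarrow>
       image_trans P i g \<Gamma> = (s, a, s') # rest \<Longrightarrow> \<not> enabled P g a"
proof -
  define cand where
    "cand = {i \<in> nodes P. \<exists>s a s' rest. image_trans P i g \<Gamma> = (s, a, s') # rest \<and> enabled P g a}"
  obtain x gx \<Gamma>r where \<Gamma>: "\<Gamma> = (x, gx) # \<Gamma>r" using steps(2) by (metis list.exhaust prod.exhaust)
  then have x: "step P g x gx" using steps(1) by simp
  obtain j where "j \<in> nodes P" "x \<in> alphabet P j" using step_actor_exists[OF prot x] by blast
  then have "j \<in> cand" using step_enabled[OF x] \<Gamma> unfolding cand_def by auto
  moreover have "finite cand" using prot unfolding cand_def cfsm_protocol_def by auto
  ultimately obtain h where h: "h \<in> cand" "rank h = Max (rank ` cand)"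
    using Max_in[of "rank ` cand"] by (metis empty_iff finite_imageI image_iff)
  have hmax: "rank i \<le> rank h" if "i \<in> cand" for i using h(2) \<open>finite cand\<close> that by simp
  from h(1) obtain s a s' rest where "image_trans P h g \<Gamma> = (s, a, s') # rest" "enabled P g a"
    unfolding cand_def by blast
  moreover have "\<not> enabled P g a'"
    if "i \<in> nodes P" "rank h < rank i" "image_trans P i g \<Gamma> = (t, a', t') # rest'" for i t a' t' rest'
    using hmax[of i] that unfolding cand_def by fastforce
  ultimately show ?thesis using that by blast
qed

definition load :: "('n, 'e, 'm, 's) cfsm \<Rightarrow> 'e \<Rightarrow> ('n, 'e, 'm, 's) gstate \<Rightarrow> nat" where
  "load P \<beta> g = (\<Sum>\<xi>\<in>edges P - {\<beta>}. length (snd g \<xi>))"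

lemma load_eq_0_iff: "finite (edges P) \<Longrightarrow> load P \<beta> g = 0 \<longleftrightarrow> (\<forall>\<xi>\<in>edges P - {\<beta>}. snd g \<xi> = [])"
  by (simp add: load_def)

lemma load_update_excluded: "snd g' = (snd g)(\<beta> := w) \<Longrightarrow> load P \<beta> g' = load P \<beta> g"
  by (auto simp: load_def intro!: sum.cong)

lemma load_update_single:
  assumes "finite (edges P)" "load P \<beta> g = 0" "e \<in> edges P - {\<beta>}" "snd g' = (snd g)(e := w)"
  shows "load P \<beta> g' = length w"
proof -
  have "load P \<beta> g' = (\<Sum>\<xi>\<in>edges P - {\<beta>}. if \<xi> = e then length w else 0)"
    using assms(2,4) load_eq_0_iff[OF assms(1)] unfolding load_def by (intro sum.cong) auto
  also have "\<dots> = length w" using assms(1,3) by simp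
  finally show ?thesis .
qed

locale ranked_protocol =
  fixes P :: "('n, 'e, 'm, 's) cfsm" and \<beta> :: 'e and rank :: "'n \<Rightarrow> nat"
  assumes protocol: "cfsm_protocol P"
    and inj_ehead: "inj_on (ehead P) (edges P)"
    and rank_increasing: "\<And>e. e \<in> edges P \<Longrightarrow> e \<noteq> \<beta> \<Longrightarrow> rank (etail P e) < rank (ehead P e)"
begin

lemma finite_edges: "finite (edges P)"
  using protocol by (simp add: cfsm_protocol_def)

lemma disabled_action_is_receive:
  assumes "e \<in> edges P" "a \<in> alphabet P (ehead P e)" "\<not> enabled P g a"
  obtains b where "a = Recv b" "b \<in> msgs P e"
proof (cases a)
  case (Recv b)
  then obtain \<xi> where "\<xi> \<in> edges P" "b \<in> msgs P \<xi>" "ehead P \<xi> = ehead P e"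
    using assms(2) by (auto simp: alphabet_def)
  then have "\<xi> = e" using inj_ehead assms(1) by (auto dest: inj_onD)
  then show ?thesis using that Recv \<open>b \<in> msgs P \<xi>\<close> by blast
qed (use assms(3) in \<open>simp add: enabled_def\<close>)

lemma reordering_receive_after_send:
  assumes e: "e \<in> edges P" "e \<noteq> \<beta>" "b \<in> msgs P e"
    and r1: "reordering P g \<Gamma> ((Send b, g1) # \<Gamma>1)"
    and start: "load P \<beta> g = 0" and stop: "load P \<beta> (path_end g \<Gamma>) = 0"
    and disabled: "\<forall>s a s' rest. image_trans P (ehead P e) g \<Gamma> = (s, a, s') # rest \<longrightarrow> \<not> enabled P g a"
  shows "\<exists>a2 g2 \<Gamma>2. reordering P g \<Gamma> ([(Send b, g1), (a2, g2)] @ \<Gamma>2) \<and>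
           load P \<beta> g1 = 1 \<and> load P \<beta> g2 = 0"
proof -
  from r1 have send: "step P g (Send b) g1" and steps1: "steps_from P g1 \<Gamma>1"
    and stop1: "load P \<beta> (path_end g1 \<Gamma>1) = 0"
    using stop by (auto simp: reordering_def)
  have "snd g e = []" using start e load_eq_0_iff[OF finite_edges] by blast
  then have c1: "snd g1 = (snd g)(e := [b])" using step_Send_channels[OF protocol send e(1,3)] by simp
  have "Send b \<in> alphabet P (etail P e)" using e(1,3) by (auto simp: alphabet_def)
  moreover have "etail P e \<noteq> ehead P e" using rank_increasing[OF e(1,2)] by auto
  ultimately have "Send b \<notin> alphabet P (ehead P e)" using alphabet_owner_unique[OF protocol] by blast
  moreover have "image_trans P (ehead P e) g ((Send b, g1) # \<Gamma>1) = image_trans P (ehead P e) g \<Gamma>"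
    using r1 unfolding reordering_def by blast
  ultimately have image: "image_trans P (ehead P e) g1 \<Gamma>1 = image_trans P (ehead P e) g \<Gamma>" by simp
  have "image_trans P (ehead P e) g1 \<Gamma>1 \<noteq> []"
  proof
    assume "image_trans P (ehead P e) g1 \<Gamma>1 = []"
    then have "prefix [b] (snd (path_end g1 \<Gamma>1) e)" using channel_prefix_path[OF steps1 e(1)] c1 by simp
    moreover have "snd (path_end g1 \<Gamma>1) e = []" using stop1 e load_eq_0_iff[OF finite_edges] by blast
    ultimately show False by simp
  qed
  then obtain s a2 s' rest where first: "image_trans P (ehead P e) g1 \<Gamma>1 = (s, a2, s') # rest"
    by (metis list.exhaust prod_cases3)
  moreover have "a2 \<in> alphabet P (ehead P e)"
    using first image_trans_in_alphabet by (metis list.set_intros(1))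
  moreover have "\<not> enabled P g a2" using disabled first image by simp
  ultimately obtain b2 where a2: "a2 = Recv b2" "b2 \<in> msgs P e"
    using disabled_action_is_receive[OF e(1)] by blast
  then have "enabled P g1 a2" using c1 enabled_Recv_iff[OF protocol e(1)] by simp
  then obtain g2 \<Gamma>2 where r2: "reordering P g1 \<Gamma>1 ((a2, g2) # \<Gamma>2)"
    using reordering_move_to_front[OF protocol steps1 first] by blast
  then have "step P g1 (Recv b2) g2" using a2 by (simp add: reordering_def)
  then have "snd g2 = (snd g)(e := [])" using step_Recv_channels[OF protocol _ e(1) a2(2)] c1 by simp
  then have "load P \<beta> g2 = 0" using load_update_single[OF finite_edges start] e by simp
  moreover have "load P \<beta> g1 = 1" using load_update_single[OF finite_edges start _ c1] e by simp
  moreover have "reordering P g \<Gamma> ([(Send b, g1), (a2, g2)] @ \<Gamma>2)"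
    using reordering_trans[OF r1] reordering_Cons[OF send r2] by simp
  ultimately show ?thesis by blast
qed

lemma ex_reordering_drained_prefix:
  assumes steps: "steps_from P g \<Gamma>" "\<Gamma> \<noteq> []"
    and start: "load P \<beta> g = 0" and stop: "load P \<beta> (path_end g \<Gamma>) = 0"
  shows "\<exists>\<Pi> \<Delta>. \<Pi> \<noteq> [] \<and> reordering P g \<Gamma> (\<Pi> @ \<Delta>) \<and>
           (\<forall>h\<in>set (path_states g \<Pi>). load P \<beta> h \<le> 1) \<and> load P \<beta> (path_end g \<Pi>) = 0"
proof -
  obtain h s a s' rest where first: "image_trans P h g \<Gamma> = (s, a, s') # rest" and en: "enabled P g a"
    and maximal: "\<And>i s a s' rest. i \<in> nodes P \<Longrightarrow> rank h < rank i \<Longrightarrow>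
       image_trans P i g \<Gamma> = (s, a, s') # rest \<Longrightarrow> \<not> enabled P g a"
    using ex_enabled_max_rank[OF protocol steps] by metis
  obtain g1 \<Gamma>1 where r1: "reordering P g \<Gamma> ((a, g1) # \<Gamma>1)"
    using reordering_move_to_front[OF protocol steps(1) first en] by blast
  have "a \<in> alphabet P h" using first image_trans_in_alphabet by (metis list.set_intros(1))
  then obtain e b where e: "e \<in> edges P" "b \<in> msgs P e"
    and ab: "a = Send b \<and> h = etail P e \<or> a = Recv b \<and> h = ehead P e"
    unfolding alphabet_def by blast
  show ?thesis
  proof (cases "e = \<beta>")
    case True
    from r1 have "step P g a g1" by (simp add: reordering_def)
    then obtain w where "snd g1 = (snd g)(e := w)"
      using ab step_Send_channels[OF protocol _ e] step_Recv_channels[OF protocol _ e] by blast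
    then have "load P \<beta> g1 = 0" using load_update_excluded[of g1 g \<beta>] True start by simp
    then show ?thesis using r1 start by (intro exI[of _ "[(a, g1)]"] exI[of _ \<Gamma>1]) auto
  next
    case False
    have "snd g e = []" using start e False load_eq_0_iff[OF finite_edges] by blast
    then have "a = Send b" "h = etail P e" using ab en enabled_Recv_iff[OF protocol e, of g] by auto
    then have "rank h < rank (ehead P e)" using rank_increasing e(1) False by blast
    then have "\<forall>s a s' rest. image_trans P (ehead P e) g \<Gamma> = (s, a, s') # rest \<longrightarrow> \<not> enabled P g a"
      using maximal[OF ehead_in_nodes[OF protocol e(1)]] by blast
    moreover have "reordering P g \<Gamma> ((Send b, g1) # \<Gamma>1)" using r1 \<open>a = Send b\<close> by simp
    ultimately obtain a2 g2 \<Gamma>2 where "reordering P g \<Gamma> ([(Send b, g1), (a2, g2)] @ \<Gamma>2)"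
      and "load P \<beta> g1 = 1" "load P \<beta> g2 = 0"
      using reordering_receive_after_send[OF e(1) False e(2) _ start stop] by blast
    then show ?thesis using start
      by (intro exI[of _ "[(Send b, g1), (a2, g2)]"] exI[of _ \<Gamma>2]) simp
  qed
qed

lemma ex_reordering_load_le_1:
  "steps_from P g \<Gamma> \<Longrightarrow> load P \<beta> g = 0 \<Longrightarrow> load P \<beta> (path_end g \<Gamma>) = 0 \<Longrightarrow>
    \<exists>\<Gamma>'. reordering P g \<Gamma> \<Gamma>' \<and> (\<forall>h\<in>set (path_states g \<Gamma>'). load P \<beta> h \<le> 1)"
proof (induction "length \<Gamma>" arbitrary: g \<Gamma> rule: less_induct)
  case less
  show ?case
  proof (cases "\<Gamma> = []")
    case True
    then show ?thesis using less.prems by (auto simp: reordering_def)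
  next
    case False
    then obtain \<Pi> \<Delta> where "\<Pi> \<noteq> []" and r: "reordering P g \<Gamma> (\<Pi> @ \<Delta>)"
      and bounded: "\<forall>h\<in>set (path_states g \<Pi>). load P \<beta> h \<le> 1"
      and mid: "load P \<beta> (path_end g \<Pi>) = 0"
      using ex_reordering_drained_prefix less.prems by blast
    then have "steps_from P (path_end g \<Pi>) \<Delta>" "length \<Delta> < length \<Gamma>"
      "load P \<beta> (path_end (path_end g \<Pi>) \<Delta>) = 0"
      using less.prems(3) by (auto simp: reordering_def neq_Nil_conv)
    then obtain \<Delta>' where "reordering P (path_end g \<Pi>) \<Delta> \<Delta>'"
      and "\<forall>h\<in>set (path_states (path_end g \<Pi>) \<Delta>'). load P \<beta> h \<le> 1"
      using less.hyps mid by blast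
    moreover have "steps_from P g \<Pi>" using r by (simp add: reordering_def)
    ultimately have "reordering P g \<Gamma> (\<Pi> @ \<Delta>')"
      and "\<forall>h\<in>set (path_states g (\<Pi> @ \<Delta>')). load P \<beta> h \<le> 1"
      using r reordering_trans reordering_append bounded by (blast, auto simp: set_path_states_append)
    then show ?thesis by blast
  qed
qed

end

section \<open>Cyclic protocols\<close>

lemma cyclic_inj_on_ehead:
  assumes "cyclic P"
  shows "inj_on (ehead P) (edges P)"
proof (rule inj_onI)
  obtain vs es where c: "length vs = length es" "distinct vs" "distinct es" "set es = edges P"
    "\<forall>k<length es. ehead P (es ! k) = vs ! ((k + 1) mod length vs)"
    using assms unfolding cyclic_def by blast
  fix e e' assume "e \<in> edges P" "e' \<in> edges P" and heads: "ehead P e = ehead P e'"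
  then obtain k l where k: "k < length es" "e = es ! k" and l: "l < length es" "e' = es ! l"
    using c(4) by (metis in_set_conv_nth)
  then have "vs ! ((k + 1) mod length vs) = vs ! ((l + 1) mod length vs)" using c(5) heads by metis
  then have "(k + 1) mod length vs = (l + 1) mod length vs"
    using nth_eq_iff_index_eq[OF c(2)] k(1) c(1) by (metis length_greater_0_conv list.size(3) mod_less_divisor not_less0)
  then have "k = l" using k(1) l(1) c(1) by (cases "k + 1 = length vs"; cases "l + 1 = length vs") auto
  then show "e = e'" using k l by simp
qed

lemma cyclic_ex_rank:
  assumes "cyclic P" "\<beta> \<in> edges P"
  obtains rank :: "'n \<Rightarrow> nat"
  where "\<And>e. e \<in> edges P \<Longrightarrow> e \<noteq> \<beta> \<Longrightarrow> rank (etail P e) < rank (ehead P e)"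
proof -
  obtain vs es where c: "length vs = length es" "distinct vs" "set es = edges P"
    "\<forall>k<length es. etail P (es ! k) = vs ! k \<and> ehead P (es ! k) = vs ! ((k + 1) mod length vs)"
    using assms(1) unfolding cyclic_def by blast
  define n where "n = length vs"
  obtain p where p: "p < n" "es ! p = \<beta>" using assms(2) c(1,3) n_def by (metis in_set_conv_nth)
  \<comment> \<open>the distance along the cycle from the head of \<open>\<beta>\<close> to \<open>v\<close>\<close>
  define rank where "rank v = (let k = the_inv_into {..<n} ((!) vs) v in
    if p < k then k - Suc p else k + n - Suc p)" for v
  have rank_nth: "rank (vs ! k) = (if p < k then k - Suc p else k + n - Suc p)" if "k < n" for k
    using the_inv_into_f_f[OF inj_on_nth[OF c(2)]] that n_def by (simp add: rank_def)
  show thesis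
  proof (rule that)
    fix e assume "e \<in> edges P" "e \<noteq> \<beta>"
    then obtain k where k: "k < n" "e = es ! k" "k \<noteq> p" using c(1,3) p(2) n_def by (metis in_set_conv_nth)
    moreover have "(k + 1) mod n < n" using k(1) by simp
    ultimately show "rank (etail P e) < rank (ehead P e)"
      using c(1,4) rank_nth[OF k(1)] rank_nth[OF \<open>(k + 1) mod n < n\<close>] p(1) n_def
      by (cases "k + 1 = n") auto
  qed
qed

theorem theorem5p2:
  fixes P :: "('n, 'e, 'm, 's) cfsm"
    and g0 :: "('n, 'e, 'm, 's) gstate"
    and ss :: "('m act \<times> ('n, 'e, 'm, 's) gstate) list"
    and \<beta> :: 'e
  assumes "cfsm_protocol P"
    and "cyclic P"
    and "is_path P g0 ss"
    and "snd g0 = C0"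
    and "snd (path_end g0 ss) = C0"
    and "\<beta> \<in> edges P"
  shows "\<exists>g0' ss'. is_path P g0' ss' \<and> locally_equal P g0 ss g0' ss' \<and>
           (\<forall>g\<in>set (path_states g0' ss').
              (\<Sum>\<xi>\<in>edges P - {\<beta>}. length (snd g \<xi>)) \<le> 1)"
proof -
  obtain rank :: "'n \<Rightarrow> nat"
    where rank: "\<And>e. e \<in> edges P \<Longrightarrow> e \<noteq> \<beta> \<Longrightarrow> rank (etail P e) < rank (ehead P e)"
    using cyclic_ex_rank[OF assms(2,6)] by blast
  interpret ranked_protocol P \<beta> rank
    by (rule ranked_protocol.intro[OF assms(1) cyclic_inj_on_ehead[OF assms(2)] rank])
  have steps: "steps_from P g0 ss" and start: "reachable P g0"
    using assms(3) by (simp_all add: is_path_def)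
  have "load P \<beta> g0 = 0" "load P \<beta> (path_end g0 ss) = 0"
    using assms(4,5) by (simp_all add: load_def C0_def)
  with ex_reordering_load_le_1[OF steps] obtain ss' where r: "reordering P g0 ss ss'"
    and bounded: "\<forall>g\<in>set (path_states g0 ss'). load P \<beta> g \<le> 1"
    by blast
  have "is_path P g0 ss'" using r start by (simp add: is_path_def reordering_def)
  moreover have "locally_equal P g0 ss g0 ss'"
    using r by (simp add: locally_equal_def path_image_def reordering_def)
  ultimately show ?thesis using bounded unfolding load_def by blast
qed

end
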